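(* Let $(X,d)$ be a metric space, $m,L\in\mathbb{N}$, $a_0,\dots,a_{m-1}\ge0$ with $\sum_{i=0}^{m-1}a_i<1$, and let $\mathcal{S}=(X,(\phi_j)_{j=1}^L,(p_j)_{j=1}^L)$ be a GIFS with probabilities of order $m$ consisting of $(a_0,\dots,a_{m-1})$-contractions. Then the map $\overline{M}_\mathcal{S}:\mathcal{P}(X)\to\mathcal{P}(X)$, $\overline{M}_\mathcal{S}(\mu):=M_\mathcal{S}(\mu,\dots,\mu)$, is a Banach contraction with respect to $d_{MK}$, with Lipschitz constant $\mathrm{Lip}(\overline{M}_\mathcal{S})\le\sum_{i=0}^{m-1}a_i$.
   Context: $X^m$ carries the maximum metric. A map $f:X^m\to X$ is an $(a_0,\dots,a_{m-1})$-contraction if $d(f(x_0,\dots,x_{m-1}),f(y_0,\dots,y_{m-1}))\le\sum_{i}a_i d(x_i,y_i)$. A GIFS with probabilities of order $m$ is $(X,(\phi_j)_{j=1}^L,(p_j)_{j=1}^L)$ with continuous $\phi_j:X^m\to X$ and $p_j>0$, $\sum_j p_j=1$. $\mathcal{P}(X)$ is the set of Borel probability measures on $X$ with compact support. $w^\sharp\mu(B):=\mu(w^{-1}(B))$. $M_\mathcal{S}(\mu_0,\dots,\mu_{m-1}):=\sum_{j}p_j\phi_j^\sharp(\mu_0\times\dots\times\mu_{m-1})$. $d_{MK}(\mu,\nu)=\sup\{|\int f d\mu-\int f d\nu|: \mathrm{Lip}(f)\le1\}$. A Banach contraction is a map with Lipschitz constant $<1$. *)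

theory Defs
  imports "HOL-Probability.Probability"
begin

text \<open>Points of X^m are functions 'm => 'a for a finite index type 'm (|'m| = m).
  The max metric on X^m induces the product topology, which is the standard
  topology on the function type.\<close>

definition is_contraction_m :: "('m::finite \<Rightarrow> real) \<Rightarrow> (('m \<Rightarrow> 'a::metric_space) \<Rightarrow> 'a) \<Rightarrow> bool" where
  "is_contraction_m a f \<longleftrightarrow>
     (\<forall>x y. dist (f x) (f y) \<le> (\<Sum>i\<in>UNIV. a i * dist (x i) (y i)))"

definition Pc :: "'a::metric_space measure set" where
  "Pc = {\<mu>. sets \<mu> = sets borel \<and> prob_space \<mu> \<and>
             (\<exists>K. compact K \<and> emeasure \<mu> K = 1)}"

definition csupp :: "'a::metric_space measure \<Rightarrow> 'a set" where
  "csupp \<mu> = (SOME K. compact K \<and> emeasure \<mu> K = 1)"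

text \<open>The product measure mu x ... x mu on X^m (concentrated on K^m, K compact,
  so that continuous maps are measurable also for non-separable X).\<close>
definition prodM :: "'a::metric_space measure \<Rightarrow> ('m::finite \<Rightarrow> 'a) measure" where
  "prodM \<mu> = PiM UNIV (\<lambda>_. restrict_space \<mu> (csupp \<mu>))"

text \<open>M_S(mu,...,mu) = sum_j p_j phi_j^sharp(mu x ... x mu); indices j < L.\<close>
definition MS_bar :: "nat \<Rightarrow> (nat \<Rightarrow> ('m::finite \<Rightarrow> 'a::metric_space) \<Rightarrow> 'a) \<Rightarrow> (nat \<Rightarrow> real)
     \<Rightarrow> 'a measure \<Rightarrow> 'a measure" where
  "MS_bar L \<phi> p \<mu> = measure_of UNIV (sets borel)
     (\<lambda>B. \<Sum>j<L. ennreal (p j) * emeasure (prodM \<mu> :: ('m \<Rightarrow> 'a) measure)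
                                   ((\<phi> j) -` B \<inter> space (prodM \<mu> :: ('m \<Rightarrow> 'a) measure)))"

definition dMK :: "'a::metric_space measure \<Rightarrow> 'a measure \<Rightarrow> real" where
  "dMK \<mu> \<nu> = (SUP f\<in>{f :: 'a \<Rightarrow> real. lipschitz_on 1 UNIV f}.
                 \<bar>integral\<^sup>L \<mu> f - integral\<^sup>L \<nu> f\<bar>)"

end

theory Submission
  imports Defs
begin

text \<open>For a 1-Lipschitz test function f, the integral of f against
  M_S(\<mu>,...,\<mu>) is the p-weighted mean of the integrals of F_j = f \<circ> \<phi>_j
  against \<mu>^m, and each F_j is Lipschitz with weight a_i in the i-th coordinate.
  Exchanging the factors \<mu> of \<mu>^m for \<nu> one at a time (Fubini) changes the
  integral of F_j by at most a_i d_MK(\<mu>,\<nu>) in the i-th step, hence by at most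
  (\<Sum>a_i) d_MK(\<mu>,\<nu>) in total.\<close>

lemma compact_PiE:
  fixes K :: "'i \<Rightarrow> 'a::topological_space set"
  assumes "\<And>i. i \<in> I \<Longrightarrow> compact (K i)"
  shows "compact (Pi\<^sub>E I K)"
proof -
  have "compactin (product_topology (\<lambda>_. euclidean) UNIV) (\<Pi>\<^sub>E i\<in>UNIV. if i \<in> I then K i else {undefined})"
    using assms by (subst compactin_PiE) auto
  moreover have "(\<Pi>\<^sub>E i\<in>UNIV. if i \<in> I then K i else {undefined}) = Pi\<^sub>E I K"
    by (force simp: PiE_iff extensional_def split: if_splits)
  ultimately show ?thesis by (simp add: euclidean_product_topology)
qed

lemma compact_imp_countable_dense:
  fixes K :: "'a::metric_space set"
  assumes "compact K"
  obtains D where "countable D" "\<And>x e. x \<in> K \<Longrightarrow> e > 0 \<Longrightarrow> \<exists>d\<in>D. dist x d < e"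
proof -
  have "\<forall>n::nat. \<exists>k. finite k \<and> k \<subseteq> K \<and> K \<subseteq> (\<Union>x\<in>k. ball x (1 / Suc n))"
    using seq_compact_imp_totally_bounded[OF compact_imp_seq_compact[OF assms]] by simp
  then obtain k where k: "\<And>n. finite (k n)" "\<And>n. K \<subseteq> (\<Union>x\<in>k n. ball x (1 / Suc n))"
    by metis
  show ?thesis
  proof (rule that[of "\<Union>n. k n"])
    show "countable (\<Union>n. k n)" using k(1) by (simp add: countable_finite)
    fix x e assume x: "x \<in> K" and e: "(e::real) > 0"
    obtain n where n: "1 / Suc n < e" using e by (meson nat_approx_posE)
    from k(2)[of n] x obtain d where "d \<in> k n" "dist x d < 1 / Suc n"
      by (auto simp: dist_commute)
    with n show "\<exists>d\<in>\<Union>n. k n. dist x d < e" by force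
  qed
qed

lemma open_Int_PiE_eq_Union_balls:
  fixes U :: "('i \<Rightarrow> 'a::metric_space) set"
  assumes "open U" "finite I"
    and dense: "\<And>i x e. i \<in> I \<Longrightarrow> x \<in> K i \<Longrightarrow> e > 0 \<Longrightarrow> \<exists>d\<in>D. dist x d < e"
  defines "cell \<equiv> \<lambda>(d, r). \<Pi>\<^sub>E i\<in>I. ball (d i) r \<inter> K i"
  shows "U \<inter> Pi\<^sub>E I K = \<Union> (cell ` {(d, r). d \<in> Pi\<^sub>E I (\<lambda>_. D) \<and> r \<in> \<rat> \<and> cell (d, r) \<subseteq> U})"
proof
  show "\<Union> (cell ` {(d, r). d \<in> Pi\<^sub>E I (\<lambda>_. D) \<and> r \<in> \<rat> \<and> cell (d, r) \<subseteq> U}) \<subseteq> U \<inter> Pi\<^sub>E I K"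
    by (auto simp: cell_def)
next
  show "U \<inter> Pi\<^sub>E I K \<subseteq> \<Union> (cell ` {(d, r). d \<in> Pi\<^sub>E I (\<lambda>_. D) \<and> r \<in> \<rat> \<and> cell (d, r) \<subseteq> U})"
  proof
    fix x assume x: "x \<in> U \<inter> Pi\<^sub>E I K"
    obtain X where X: "x \<in> Pi\<^sub>E UNIV X" "\<And>i. open (X i)" "Pi\<^sub>E UNIV X \<subseteq> U"
      using product_topology_open_contains_basis[of "\<lambda>_. euclidean" UNIV U x] x \<open>open U\<close>
      by (auto simp: open_fun_def)
    have "\<forall>i. \<exists>e>0. ball (x i) e \<subseteq> X i"
      using X(1,2) by (meson PiE_E UNIV_I open_contains_ball)
    then obtain e where e: "\<And>i. e i > 0" "\<And>i. ball (x i) (e i) \<subseteq> X i" by metis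
    define e0 where "e0 = Min (insert 1 (e ` I))"
    have e0: "e0 > 0" "\<And>i. i \<in> I \<Longrightarrow> e0 \<le> e i"
      unfolding e0_def using e(1) \<open>finite I\<close> by auto
    obtain r where r: "r \<in> \<rat>" "0 < r" "r < e0 / 2"
      using e0 Rats_dense_in_real[of 0 "e0 / 2"] by auto
    have "\<forall>i\<in>I. \<exists>d\<in>D. dist (x i) d < r"
      using dense x r(2) by (auto simp: PiE_iff)
    then obtain d where d: "\<And>i. i \<in> I \<Longrightarrow> d i \<in> D" "\<And>i. i \<in> I \<Longrightarrow> dist (x i) (d i) < r"
      by metis
    have "cell (restrict d I, r) \<subseteq> U"
    proof
      fix y assume y: "y \<in> cell (restrict d I, r)"
      have "y i \<in> X i" for i
      proof (cases "i \<in> I")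
        case True
        have "dist (d i) (y i) < r" using y True by (auto simp: cell_def PiE_iff)
        then have "dist (x i) (y i) < e i"
          using d(2)[OF True] e0(2)[OF True] r dist_triangle[of "x i" "y i" "d i"] by linarith
        then show ?thesis using e(2)[of i] by auto
      next
        case False
        then have "y i = x i" using x y PiE_arb[of x I K i] PiE_arb[of y I _ i] by (simp add: cell_def)
        then show ?thesis using X(1) by auto
      qed
      then show "y \<in> U" using X(3) y by (auto simp: cell_def)
    qed
    moreover have "x \<in> cell (restrict d I, r)"
      unfolding cell_def using x d(2) by (auto simp: PiE_iff dist_commute)
    ultimately show "x \<in> \<Union> (cell ` {(d, r). d \<in> Pi\<^sub>E I (\<lambda>_. D) \<and> r \<in> \<rat> \<and> cell (d, r) \<subseteq> U})"
      using d(1) r(1) by (intro UnionI[of "cell (restrict d I, r)"] imageI) auto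
  qed
qed

text \<open>For non-separable X the product \<sigma>-algebra on X^I is smaller than the Borel
  \<sigma>-algebra; on products of compact sets this gap disappears because compact metric
  spaces are separable.\<close>
lemma borel_measurable_PiM_compact:
  fixes \<phi> :: "('i \<Rightarrow> 'a::metric_space) \<Rightarrow> 'b::topological_space"
  assumes cont: "continuous_on UNIV \<phi>" and "finite I"
    and K: "\<And>i. i \<in> I \<Longrightarrow> compact (K i)"
    and M: "\<And>i. i \<in> I \<Longrightarrow> sets (M i) = sets (restrict_space borel (K i))"
  shows "\<phi> \<in> borel_measurable (Pi\<^sub>M I M)"
proof (rule borel_measurableI)
  fix S :: "'b set" assume "open S"
  have "space (M i) = K i" if "i \<in> I" for i
    using sets_eq_imp_space_eq[OF M[OF that]] by (simp add: space_restrict_space)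
  then have space: "space (Pi\<^sub>M I M) = Pi\<^sub>E I K"
    by (simp add: space_PiM cong: PiE_cong)
  have "compact (\<Union>i\<in>I. K i)" using K \<open>finite I\<close> by (intro compact_UN) auto
  then obtain D where "countable D" and dense: "\<And>x e. x \<in> (\<Union>i\<in>I. K i) \<Longrightarrow> e > 0 \<Longrightarrow> \<exists>d\<in>D. dist x d < e"
    using compact_imp_countable_dense by metis
  define cell where "cell \<equiv> \<lambda>(d, r). \<Pi>\<^sub>E i\<in>I. ball (d i) r \<inter> K i"
  define C where "C = cell ` {(d, r). d \<in> Pi\<^sub>E I (\<lambda>_. D) \<and> r \<in> \<rat> \<and> cell (d, r) \<subseteq> \<phi> -` S}"
  have "open (\<phi> -` S)"
    using continuous_on_open_vimage[OF open_UNIV, of \<phi>] cont \<open>open S\<close> by simp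
  then have "\<phi> -` S \<inter> space (Pi\<^sub>M I M) = \<Union>C"
    unfolding space C_def cell_def using dense \<open>finite I\<close> by (intro open_Int_PiE_eq_Union_balls) auto
  moreover have "countable C"
    unfolding C_def using \<open>countable D\<close> \<open>finite I\<close>
    by (intro countable_image countable_subset[OF _ countable_SIGMA[OF countable_PiE countable_rat]])
      auto
  moreover have "cell (d, r) \<in> sets (Pi\<^sub>M I M)" for d r
  proof -
    have "ball (d i) r \<inter> K i \<in> sets (M i)" if "i \<in> I" for i
    proof -
      have "K i \<in> sets borel" using K[OF that] by (simp add: borel_closed compact_imp_closed)
      then show ?thesis unfolding M[OF that] by (subst sets_restrict_space_iff) (auto intro: sets.Int)
    qed
    then show ?thesis unfolding cell_def using \<open>finite I\<close> by (auto intro: sets_PiM_I_finite)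
  qed
  then have "C \<subseteq> sets (Pi\<^sub>M I M)" unfolding C_def by auto
  ultimately show "\<phi> -` S \<inter> space (Pi\<^sub>M I M) \<in> sets (Pi\<^sub>M I M)"
    by (simp add: sets.countable_Union)
qed

lemma (in prob_space) abs_integral_le_const:
  fixes f :: "'a \<Rightarrow> real"
  assumes "integrable M f" "AE x in M. \<bar>f x\<bar> \<le> C"
  shows "\<bar>integral\<^sup>L M f\<bar> \<le> C"
proof -
  have "\<bar>integral\<^sup>L M f\<bar> \<le> (\<integral>x. \<bar>f x\<bar> \<partial>M)" by (rule integral_abs_bound)
  also have "\<dots> \<le> C" using assms by (intro integral_le_const) auto
  finally show ?thesis .
qed

lemma integrable_continuous_on_compact_AE:
  fixes f :: "'a::topological_space \<Rightarrow> real"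
  assumes "finite_measure M"
    and "f \<in> borel_measurable M" "compact K" "continuous_on K f" "AE x in M. x \<in> K"
  shows "integrable M f"
proof -
  interpret finite_measure M by fact
  have "bounded (f ` K)" using assms(3,4) by (intro compact_imp_bounded compact_continuous_image)
  then obtain B where "\<And>x. x \<in> K \<Longrightarrow> \<bar>f x\<bar> \<le> B" by (auto simp: bounded_real)
  with assms(5) have "AE x in M. norm (f x) \<le> B" by auto
  then show ?thesis using assms(2) by (intro integrable_const_bound)
qed

lemma Pc_D:
  assumes "\<mu> \<in> Pc"
  shows "sets \<mu> = sets borel" "space \<mu> = UNIV" "prob_space \<mu>"
  using assms unfolding Pc_def by (auto dest: sets_eq_imp_space_eq)

lemma
  assumes "\<mu> \<in> Pc"
  shows compact_csupp: "compact (csupp \<mu>)" and emeasure_csupp: "emeasure \<mu> (csupp \<mu>) = 1"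
proof -
  have "\<exists>K. compact K \<and> emeasure \<mu> K = 1" using assms unfolding Pc_def by auto
  from someI_ex[OF this] show "compact (csupp \<mu>)" "emeasure \<mu> (csupp \<mu>) = 1"
    unfolding csupp_def by auto
qed

lemma csupp_in_sets:
  assumes "\<mu> \<in> Pc"
  shows "csupp \<mu> \<in> sets \<mu>"
  using compact_csupp[OF assms] Pc_D(1)[OF assms] by (simp add: borel_closed compact_imp_closed)

lemma AE_in_csupp:
  assumes "\<mu> \<in> Pc"
  shows "AE x in \<mu>. x \<in> csupp \<mu>"
proof -
  interpret prob_space \<mu> using Pc_D(3)[OF assms] .
  show ?thesis using emeasure_csupp[OF assms] by (intro AE_prob_1) (simp add: measure_def)
qed

lemma
  assumes "\<mu> \<in> Pc"
  shows prob_space_restrict_csupp: "prob_space (restrict_space \<mu> (csupp \<mu>))"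
    and sets_restrict_csupp: "sets (restrict_space \<mu> (csupp \<mu>)) = sets (restrict_space borel (csupp \<mu>))"
    and space_restrict_csupp: "space (restrict_space \<mu> (csupp \<mu>)) = csupp \<mu>"
  using prob_space_restrict_space[OF csupp_in_sets emeasure_csupp, OF assms assms]
    restrict_space_sets_cong[OF refl Pc_D(1)[OF assms]] Pc_D(2)[OF assms]
  by (auto simp: space_restrict_space)

lemma integral_restrict_csupp:
  fixes f :: "'a::metric_space \<Rightarrow> real"
  assumes "\<mu> \<in> Pc" "f \<in> borel_measurable borel"
  shows "integral\<^sup>L (restrict_space \<mu> (csupp \<mu>)) f = integral\<^sup>L \<mu> f"
proof -
  have "integral\<^sup>L (restrict_space \<mu> (csupp \<mu>)) f = (\<integral>x. indicator (csupp \<mu>) x *\<^sub>R f x \<partial>\<mu>)"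
    using csupp_in_sets[OF assms(1)] Pc_D(2)[OF assms(1)] by (intro integral_restrict_space) auto
  also have "\<dots> = integral\<^sup>L \<mu> f"
    using AE_in_csupp[OF assms(1)] assms(2) csupp_in_sets[OF assms(1)]
    by (intro integral_cong_AE)
      (auto intro!: borel_measurable_scaleR borel_measurable_indicator
        simp: measurable_cong_sets[OF Pc_D(1)[OF assms(1)] refl] Pc_D(1)[OF assms(1)])
  finally show ?thesis .
qed

lemma integrable_continuous_Pc:
  fixes f :: "'a::metric_space \<Rightarrow> real"
  assumes "\<mu> \<in> Pc" "continuous_on UNIV f"
  shows "integrable \<mu> f"
proof -
  interpret prob_space \<mu> using Pc_D(3)[OF assms(1)] .
  show ?thesis
    using assms compact_csupp AE_in_csupp
    by (intro integrable_continuous_on_compact_AE[where K="csupp \<mu>"] finite_measure_axioms)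
      (auto intro: continuous_on_subset borel_measurable_continuous_onI
            simp: measurable_cong_sets[OF Pc_D(1)[OF assms(1)] refl])
qed

lemma abs_integral_sub_le_Pc:
  fixes f :: "'a::metric_space \<Rightarrow> real"
  assumes "\<mu> \<in> Pc" "lipschitz_on c UNIV f" "\<And>y. y \<in> csupp \<mu> \<Longrightarrow> dist y z \<le> R"
  shows "\<bar>integral\<^sup>L \<mu> f - f z\<bar> \<le> c * R"
proof -
  interpret prob_space \<mu> using Pc_D(3)[OF assms(1)] .
  have int: "integrable \<mu> f"
    using assms(1,2) by (intro integrable_continuous_Pc lipschitz_on_continuous_on)
  have "AE x in \<mu>. \<bar>f x - f z\<bar> \<le> c * R"
    using AE_in_csupp[OF assms(1)]
  proof eventually_elim
    case (elim x)
    have "\<bar>f x - f z\<bar> \<le> c * dist x z"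
      using assms(2) by (auto simp: lipschitz_on_def dist_real_def)
    also have "\<dots> \<le> c * R"
      using assms(2,3) elim by (intro mult_left_mono) (auto simp: lipschitz_on_def)
    finally show ?case .
  qed
  then have "\<bar>\<integral>x. f x - f z \<partial>\<mu>\<bar> \<le> c * R" using int by (intro abs_integral_le_const) auto
  then show ?thesis using int by (simp add: prob_space)
qed

lemma dMK_leI:
  assumes "\<And>f :: 'a::metric_space \<Rightarrow> real. lipschitz_on 1 UNIV f \<Longrightarrow> \<bar>integral\<^sup>L \<mu> f - integral\<^sup>L \<nu> f\<bar> \<le> C"
  shows "dMK \<mu> \<nu> \<le> C"
  unfolding dMK_def
proof (rule cSUP_least)
  have "lipschitz_on 1 UNIV (\<lambda>_::'a. 0::real)" by (simp add: lipschitz_on_def)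
  then show "{f :: 'a \<Rightarrow> real. lipschitz_on 1 UNIV f} \<noteq> {}" by blast
qed (use assms in auto)

text \<open>Without this bound the supremum defining \<^const>\<open>dMK\<close> would be an unspecified real.\<close>
lemma bdd_above_dMK:
  fixes \<mu> \<nu> :: "'a::metric_space measure"
  assumes "\<mu> \<in> Pc" "\<nu> \<in> Pc"
  shows "bdd_above ((\<lambda>f. \<bar>integral\<^sup>L \<mu> f - integral\<^sup>L \<nu> f\<bar>) ` {f :: 'a \<Rightarrow> real. lipschitz_on 1 UNIV f})"
proof -
  obtain R where R: "\<And>y. y \<in> csupp \<mu> \<union> csupp \<nu> \<Longrightarrow> dist y undefined \<le> R"
    using compact_imp_bounded[OF compact_Un[OF compact_csupp compact_csupp, OF assms]]
      bounded_any_center by (metis dist_commute)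
  have "\<bar>integral\<^sup>L \<mu> f - integral\<^sup>L \<nu> f\<bar> \<le> 2 * R" if "lipschitz_on 1 UNIV f" for f :: "'a \<Rightarrow> real"
  proof -
    have "\<bar>integral\<^sup>L \<mu> f - f undefined\<bar> \<le> R" "\<bar>integral\<^sup>L \<nu> f - f undefined\<bar> \<le> R"
      using abs_integral_sub_le_Pc[OF assms(1) that] abs_integral_sub_le_Pc[OF assms(2) that] R
      by auto
    then show ?thesis by linarith
  qed
  then show ?thesis by (intro bdd_aboveI2[where M="2 * R"]) auto
qed

lemma abs_integral_diff_le_dMK:
  fixes f :: "'a::metric_space \<Rightarrow> real"
  assumes "\<mu> \<in> Pc" "\<nu> \<in> Pc" "lipschitz_on c UNIV f"
  shows "\<bar>integral\<^sup>L \<mu> f - integral\<^sup>L \<nu> f\<bar> \<le> c * dMK \<mu> \<nu>"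
proof (cases "c = 0")
  case True
  then have "f = (\<lambda>_. f undefined)" using assms(3) by (auto simp: lipschitz_on_def)
  have "integral\<^sup>L \<rho> f = f undefined" if "\<rho> \<in> Pc" for \<rho>
  proof -
    interpret prob_space \<rho> using Pc_D(3)[OF that] .
    show ?thesis by (subst \<open>f = (\<lambda>_. f undefined)\<close>) (simp add: prob_space)
  qed
  then have "integral\<^sup>L \<mu> f = integral\<^sup>L \<nu> f" using assms(1,2) by simp
  then show ?thesis using True by simp
next
  case False
  then have "c > 0" using assms(3) by (simp add: lipschitz_on_def)
  have "lipschitz_on 1 UNIV (\<lambda>x. f x / c)"
    using assms(3) \<open>c > 0\<close> unfolding lipschitz_on_def dist_real_def
    by (auto simp: diff_divide_distrib[symmetric] field_simps)
  then have "\<bar>integral\<^sup>L \<mu> (\<lambda>x. f x / c) - integral\<^sup>L \<nu> (\<lambda>x. f x / c)\<bar> \<le> dMK \<mu> \<nu>"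
    unfolding dMK_def by (intro cSUP_upper bdd_above_dMK assms(1,2)) auto
  then show ?thesis using \<open>c > 0\<close> by (simp add: diff_divide_distrib[symmetric] field_simps)
qed

definition weighted_lipschitz ::
    "('i::finite \<Rightarrow> real) \<Rightarrow> (('i \<Rightarrow> 'a::metric_space) \<Rightarrow> 'b::metric_space) \<Rightarrow> bool" where
  "weighted_lipschitz a F \<longleftrightarrow> (\<forall>x y. dist (F x) (F y) \<le> (\<Sum>k\<in>UNIV. a k * dist (x k) (y k)))"

lemma weighted_lipschitz_comp:
  assumes "lipschitz_on 1 UNIV f" "is_contraction_m a \<phi>"
  shows "weighted_lipschitz a (\<lambda>x. f (\<phi> x))"
  unfolding weighted_lipschitz_def
proof (intro allI)
  fix x y
  have "dist (f (\<phi> x)) (f (\<phi> y)) \<le> dist (\<phi> x) (\<phi> y)"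
    using assms(1) by (simp add: lipschitz_on_def)
  also have "\<dots> \<le> (\<Sum>k\<in>UNIV. a k * dist (x k) (y k))"
    using assms(2) by (simp add: is_contraction_m_def)
  finally show "dist (f (\<phi> x)) (f (\<phi> y)) \<le> (\<Sum>k\<in>UNIV. a k * dist (x k) (y k))" .
qed

lemma continuous_on_weighted_lipschitz:
  fixes F :: "('i::finite \<Rightarrow> 'a::metric_space) \<Rightarrow> 'b::metric_space"
  assumes "weighted_lipschitz a F"
  shows "continuous_on UNIV F"
  unfolding continuous_on_def
proof (intro ballI)
  fix x :: "'i \<Rightarrow> 'a"
  let ?g = "\<lambda>y. \<Sum>k\<in>UNIV. a k * dist (y k) (x k)"
  have "continuous_on UNIV ?g"
    by (intro continuous_intros continuous_on_product_then_coordinatewise continuous_on_id)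
  then have "(?g \<longlongrightarrow> ?g x) (at x within UNIV)" unfolding continuous_on_def by blast
  then have g0: "(?g \<longlongrightarrow> 0) (at x within UNIV)" by simp
  have bound: "\<forall>y. norm (dist (F y) (F x)) \<le> ?g y"
    using assms by (simp add: weighted_lipschitz_def)
  have "((\<lambda>y. dist (F y) (F x)) \<longlongrightarrow> 0) (at x within UNIV)"
    by (rule Lim_null_comparison[OF always_eventually[OF bound] g0])
  then show "(F \<longlongrightarrow> F x) (at x within UNIV)" by (rule tendsto_dist_iff[THEN iffD2])
qed

lemma lipschitz_on_weighted_lipschitz_update:
  assumes "weighted_lipschitz a F" "a i \<ge> 0"
  shows "lipschitz_on (a i) UNIV (\<lambda>y. F (x(i := y)))"
  unfolding lipschitz_on_def
proof (intro conjI ballI)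
  fix y y'
  have "dist (F (x(i := y))) (F (x(i := y'))) \<le> (\<Sum>k\<in>UNIV. a k * dist ((x(i := y)) k) ((x(i := y')) k))"
    using assms(1) unfolding weighted_lipschitz_def by (rule spec2)
  also have "\<dots> = (\<Sum>k\<in>UNIV. if k = i then a i * dist y y' else 0)"
    by (intro sum.cong) auto
  finally show "dist (F (x(i := y))) (F (x(i := y'))) \<le> a i * dist y y'" by simp
qed (rule assms(2))

lemma weighted_lipschitz_integral_update:
  fixes F :: "('i::finite \<Rightarrow> 'a::metric_space) \<Rightarrow> real"
  assumes "weighted_lipschitz a F" "\<And>k. a k \<ge> 0" "\<mu> \<in> Pc"
  shows "weighted_lipschitz a (\<lambda>x. \<integral>y. F (x(i := y)) \<partial>\<mu>)"
  unfolding weighted_lipschitz_def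
proof (intro allI)
  interpret prob_space \<mu> using Pc_D(3)[OF assms(3)] .
  fix x x' :: "'i \<Rightarrow> 'a"
  let ?C = "\<Sum>k\<in>UNIV. a k * dist (x k) (x' k)"
  have int: "integrable \<mu> (\<lambda>y. F (z(i := y)))" for z
    by (rule integrable_continuous_Pc[OF assms(3) lipschitz_on_continuous_on,
          OF lipschitz_on_weighted_lipschitz_update[OF assms(1,2)]])
  have bound: "\<bar>F (x(i := y)) - F (x'(i := y))\<bar> \<le> ?C" for y
  proof -
    have "\<bar>F (x(i := y)) - F (x'(i := y))\<bar> \<le> (\<Sum>k\<in>UNIV. a k * dist ((x(i := y)) k) ((x'(i := y)) k))"
      using assms(1)[unfolded weighted_lipschitz_def, rule_format, of "x(i := y)" "x'(i := y)"]
      by (simp only: dist_real_def)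
    also have "\<dots> \<le> ?C" using assms(2) by (intro sum_mono) auto
    finally show ?thesis .
  qed
  have "\<bar>\<integral>y. F (x(i := y)) - F (x'(i := y)) \<partial>\<mu>\<bar> \<le> ?C"
    by (intro abs_integral_le_const Bochner_Integration.integrable_diff int AE_I2 bound)
  then show "dist (\<integral>y. F (x(i := y)) \<partial>\<mu>) (\<integral>y. F (x'(i := y)) \<partial>\<mu>) \<le> ?C"
    by (simp only: dist_real_def Bochner_Integration.integral_diff[OF int int])
qed

definition PiM_csupp :: "'i set \<Rightarrow> ('i \<Rightarrow> 'a::metric_space measure) \<Rightarrow> ('i \<Rightarrow> 'a) measure" where
  "PiM_csupp I \<rho> = Pi\<^sub>M I (\<lambda>k. restrict_space (\<rho> k) (csupp (\<rho> k)))"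

lemma prodM_eq_PiM_csupp: "prodM \<mu> = PiM_csupp UNIV (\<lambda>_. \<mu>)"
  by (simp add: prodM_def PiM_csupp_def)

lemma prob_space_PiM_csupp:
  assumes "\<And>k. k \<in> I \<Longrightarrow> \<rho> k \<in> Pc"
  shows "prob_space (PiM_csupp I \<rho>)"
  unfolding PiM_csupp_def using assms by (intro prob_space_PiM prob_space_restrict_csupp)

lemma space_PiM_csupp:
  assumes "\<And>k. k \<in> I \<Longrightarrow> \<rho> k \<in> Pc"
  shows "space (PiM_csupp I \<rho>) = (\<Pi>\<^sub>E k\<in>I. csupp (\<rho> k))"
  unfolding PiM_csupp_def using assms by (simp add: space_PiM space_restrict_csupp cong: PiE_cong)

lemma borel_measurable_PiM_csupp:
  assumes "finite I" "\<And>k. k \<in> I \<Longrightarrow> \<rho> k \<in> Pc" "continuous_on UNIV F"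
  shows "F \<in> borel_measurable (PiM_csupp I \<rho>)"
  unfolding PiM_csupp_def using assms compact_csupp sets_restrict_csupp
  by (intro borel_measurable_PiM_compact[where K="\<lambda>k. csupp (\<rho> k)"]) auto

lemma integrable_PiM_csupp:
  fixes F :: "('i \<Rightarrow> 'a::metric_space) \<Rightarrow> real"
  assumes "finite I" "\<And>k. k \<in> I \<Longrightarrow> \<rho> k \<in> Pc" "continuous_on UNIV F"
  shows "integrable (PiM_csupp I \<rho>) F"
proof (rule integrable_continuous_on_compact_AE)
  show "finite_measure (PiM_csupp I \<rho>)"
    using prob_space_PiM_csupp[of I \<rho>] assms(2) by (simp add: prob_space_def)
  show "compact (\<Pi>\<^sub>E k\<in>I. csupp (\<rho> k))" using assms(2) by (auto intro: compact_PiE compact_csupp)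
  show "AE x in PiM_csupp I \<rho>. x \<in> (\<Pi>\<^sub>E k\<in>I. csupp (\<rho> k))"
    using space_PiM_csupp[of I \<rho>, OF assms(2)] by (intro AE_I2) auto
qed (use assms in \<open>auto intro: borel_measurable_PiM_csupp continuous_on_subset\<close>)

lemma integral_PiM_csupp_update:
  fixes F :: "('i::finite \<Rightarrow> 'a::metric_space) \<Rightarrow> real"
  assumes "\<And>k. \<rho> k \<in> Pc" "\<sigma> \<in> Pc" "\<And>k. a k \<ge> 0" "weighted_lipschitz a F"
  shows "integral\<^sup>L (PiM_csupp UNIV (\<rho>(i := \<sigma>))) F
    = (\<integral>x. (\<integral>y. F (x(i := y)) \<partial>\<sigma>) \<partial>PiM_csupp (- {i}) \<rho>)"
proof -
  define M where "M = (\<lambda>k. restrict_space ((\<rho>(i := \<sigma>)) k) (csupp ((\<rho>(i := \<sigma>)) k)))"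
  have \<rho>\<sigma>: "(\<rho>(i := \<sigma>)) k \<in> Pc" for k using assms(1,2) by simp
  have "prob_space (M k)" for k unfolding M_def by (rule prob_space_restrict_csupp[OF \<rho>\<sigma>])
  then interpret product_sigma_finite M
    unfolding product_sigma_finite_def by (auto intro: prob_space_imp_sigma_finite)
  have UNIV: "insert i (- {i}) = UNIV" by auto
  have "integral\<^sup>L (PiM_csupp UNIV (\<rho>(i := \<sigma>))) F = integral\<^sup>L (Pi\<^sub>M (insert i (- {i})) M) F"
    by (simp add: PiM_csupp_def M_def UNIV)
  also have "\<dots> = (\<integral>x. (\<integral>y. F (x(i := y)) \<partial>M i) \<partial>Pi\<^sub>M (- {i}) M)"
    using integrable_PiM_csupp[OF _ \<rho>\<sigma> continuous_on_weighted_lipschitz[OF assms(4)]]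
    by (intro product_integral_insert) (auto simp: PiM_csupp_def M_def UNIV)
  also have "\<dots> = (\<integral>x. (\<integral>y. F (x(i := y)) \<partial>\<sigma>) \<partial>PiM_csupp (- {i}) \<rho>)"
  proof -
    have "Pi\<^sub>M (- {i}) M = PiM_csupp (- {i}) \<rho>"
      unfolding PiM_csupp_def M_def by (intro PiM_cong) auto
    moreover have "(\<integral>y. F (x(i := y)) \<partial>M i) = (\<integral>y. F (x(i := y)) \<partial>\<sigma>)" for x
      unfolding M_def using assms
      by (auto intro!: integral_restrict_csupp borel_measurable_continuous_onI lipschitz_on_continuous_on
          lipschitz_on_weighted_lipschitz_update)
    ultimately show ?thesis by simp
  qed
  finally show ?thesis .
qed

lemma abs_integral_PiM_csupp_update_diff_le:
  fixes F :: "('i::finite \<Rightarrow> 'a::metric_space) \<Rightarrow> real"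
  assumes "\<And>k. \<rho> k \<in> Pc" "\<mu> \<in> Pc" "\<nu> \<in> Pc" "\<And>k. a k \<ge> 0" "weighted_lipschitz a F"
  shows "\<bar>integral\<^sup>L (PiM_csupp UNIV (\<rho>(i := \<mu>))) F - integral\<^sup>L (PiM_csupp UNIV (\<rho>(i := \<nu>))) F\<bar>
    \<le> a i * dMK \<mu> \<nu>"
proof -
  define G where "G = (\<lambda>\<sigma> x. \<integral>y. F (x(i := y)) \<partial>\<sigma>)"
  define Q where "Q = PiM_csupp (- {i}) \<rho>"
  interpret Q: prob_space Q unfolding Q_def using assms(1) by (rule prob_space_PiM_csupp)
  have int: "integrable Q (G \<sigma>)" if "\<sigma> \<in> Pc" for \<sigma>
    unfolding Q_def G_def using assms(1,4,5) that
    by (intro integrable_PiM_csupp continuous_on_weighted_lipschitz weighted_lipschitz_integral_update)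
      auto
  have "\<bar>G \<mu> x - G \<nu> x\<bar> \<le> a i * dMK \<mu> \<nu>" for x
    unfolding G_def using assms
    by (intro abs_integral_diff_le_dMK lipschitz_on_weighted_lipschitz_update) auto
  then have "\<bar>\<integral>x. G \<mu> x - G \<nu> x \<partial>Q\<bar> \<le> a i * dMK \<mu> \<nu>"
    using int assms(2,3) by (intro Q.abs_integral_le_const AE_I2 Bochner_Integration.integrable_diff)
  moreover have "integral\<^sup>L (PiM_csupp UNIV (\<rho>(i := \<sigma>))) F = integral\<^sup>L Q (G \<sigma>)" if "\<sigma> \<in> Pc" for \<sigma>
    unfolding G_def Q_def by (rule integral_PiM_csupp_update[OF assms(1) that assms(4,5)])
  ultimately show ?thesis
    using assms(2,3) by (simp add: Bochner_Integration.integral_diff[OF int int])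
qed

lemma abs_integral_prodM_diff_le:
  fixes F :: "('i::finite \<Rightarrow> 'a::metric_space) \<Rightarrow> real"
  assumes "\<mu> \<in> Pc" "\<nu> \<in> Pc" "\<And>k. a k \<ge> 0" "weighted_lipschitz a F"
  shows "\<bar>integral\<^sup>L (prodM \<mu>) F - integral\<^sup>L (prodM \<nu>) F\<bar> \<le> (\<Sum>k\<in>UNIV. a k) * dMK \<mu> \<nu>"
proof -
  define hybrid :: "'i set \<Rightarrow> 'i \<Rightarrow> 'a measure"
    where "hybrid S = (\<lambda>k. if k \<in> S then \<nu> else \<mu>)" for S
  have "\<bar>integral\<^sup>L (PiM_csupp UNIV (hybrid {})) F - integral\<^sup>L (PiM_csupp UNIV (hybrid S)) F\<bar>
      \<le> (\<Sum>k\<in>S. a k) * dMK \<mu> \<nu>" if "finite S" for S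
    using that
  proof (induction S rule: finite_induct)
    case (insert i S)
    have "(hybrid S)(i := \<mu>) = hybrid S" "(hybrid S)(i := \<nu>) = hybrid (insert i S)"
      using insert.hyps(2) by (auto simp: hybrid_def)
    moreover have "hybrid S k \<in> Pc" for k using assms(1,2) by (simp add: hybrid_def)
    ultimately have "\<bar>integral\<^sup>L (PiM_csupp UNIV (hybrid S)) F
        - integral\<^sup>L (PiM_csupp UNIV (hybrid (insert i S))) F\<bar> \<le> a i * dMK \<mu> \<nu>"
      using abs_integral_PiM_csupp_update_diff_le[of "hybrid S" \<mu> \<nu> a F i] assms by simp
    with insert.IH have "\<bar>integral\<^sup>L (PiM_csupp UNIV (hybrid {})) F
        - integral\<^sup>L (PiM_csupp UNIV (hybrid (insert i S))) F\<bar>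
        \<le> (\<Sum>k\<in>S. a k) * dMK \<mu> \<nu> + a i * dMK \<mu> \<nu>"
      by linarith
    then show ?case using insert.hyps by (simp add: distrib_right)
  qed simp
  from this[of UNIV] show ?thesis by (simp add: hybrid_def prodM_eq_PiM_csupp)
qed

lemma borel_measurable_prodM:
  assumes "\<mu> \<in> Pc" "continuous_on UNIV \<phi>"
  shows "\<phi> \<in> borel_measurable (prodM \<mu> :: ('i::finite \<Rightarrow> 'a::metric_space) measure)"
  unfolding prodM_eq_PiM_csupp using assms by (intro borel_measurable_PiM_csupp) auto

lemma
  assumes "\<mu> \<in> Pc"
  shows prob_space_prodM: "prob_space (prodM \<mu> :: ('i::finite \<Rightarrow> 'a::metric_space) measure)"
    and space_prodM: "space (prodM \<mu> :: ('i \<Rightarrow> 'a) measure) = (\<Pi>\<^sub>E k\<in>UNIV. csupp \<mu>)"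
  unfolding prodM_eq_PiM_csupp using assms by (auto intro: prob_space_PiM_csupp simp: space_PiM_csupp)

lemma nn_integral_mixture:
  fixes N :: "'j \<Rightarrow> 'a measure" and c :: "'j \<Rightarrow> ennreal"
  assumes "finite J" and sets_N: "\<And>j. j \<in> J \<Longrightarrow> sets (N j) = sets M"
    and emeasure_M: "\<And>A. A \<in> sets M \<Longrightarrow> emeasure M A = (\<Sum>j\<in>J. c j * emeasure (N j) A)"
    and "g \<in> borel_measurable M"
  shows "(\<integral>\<^sup>+x. g x \<partial>M) = (\<Sum>j\<in>J. c j * (\<integral>\<^sup>+x. g x \<partial>N j))"
  using \<open>g \<in> borel_measurable M\<close>
proof (induction rule: borel_measurable_induct)
  case (cong f g)
  have "(\<integral>\<^sup>+x. f x \<partial>N j) = (\<integral>\<^sup>+x. g x \<partial>N j)" if "j \<in> J" for j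
    using cong(3) sets_eq_imp_space_eq[OF sets_N[OF that]] by (intro nn_integral_cong) auto
  moreover have "(\<integral>\<^sup>+x. f x \<partial>M) = (\<integral>\<^sup>+x. g x \<partial>M)" using cong(3) by (intro nn_integral_cong) auto
  ultimately show ?case using cong(4) by simp
next
  case (set A)
  then show ?case using emeasure_M[OF set] sets_N by (simp add: nn_integral_indicator)
next
  case (mult u c')
  have u_N: "u \<in> borel_measurable (N j)" if "j \<in> J" for j
    using mult(2) by (simp add: measurable_cong_sets[OF sets_N[OF that] refl])
  have "(\<integral>\<^sup>+x. c' * u x \<partial>M) = c' * (\<integral>\<^sup>+x. u x \<partial>M)" using mult(2) by (rule nn_integral_cmult)
  also have "\<dots> = (\<Sum>j\<in>J. c j * (c' * (\<integral>\<^sup>+x. u x \<partial>N j)))"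
    using mult(4) by (simp add: sum_distrib_left mult.left_commute)
  also have "\<dots> = (\<Sum>j\<in>J. c j * (\<integral>\<^sup>+x. c' * u x \<partial>N j))"
    using u_N by (intro sum.cong refl) (simp add: nn_integral_cmult)
  finally show ?case .
next
  case (add u v)
  have u_N: "u \<in> borel_measurable (N j)" "v \<in> borel_measurable (N j)" if "j \<in> J" for j
    using add.hyps by (simp_all add: measurable_cong_sets[OF sets_N[OF that] refl])
  have "(\<integral>\<^sup>+x. v x + u x \<partial>M) = (\<integral>\<^sup>+x. v x \<partial>M) + (\<integral>\<^sup>+x. u x \<partial>M)"
    using add.hyps by (intro nn_integral_add) auto
  also have "\<dots> = (\<Sum>j\<in>J. c j * ((\<integral>\<^sup>+x. v x \<partial>N j) + (\<integral>\<^sup>+x. u x \<partial>N j)))"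
    using add.IH by (simp add: sum.distrib distrib_left)
  also have "\<dots> = (\<Sum>j\<in>J. c j * (\<integral>\<^sup>+x. v x + u x \<partial>N j))"
    using u_N by (intro sum.cong refl) (simp add: nn_integral_add)
  finally show ?case .
next
  case (seq U)
  have U_N: "U i \<in> borel_measurable (N j)" if "j \<in> J" for j i
    using seq.hyps by (simp add: measurable_cong_sets[OF sets_N[OF that] refl])
  have "(\<integral>\<^sup>+x. (SUP i. U i) x \<partial>M) = (SUP i. (\<integral>\<^sup>+x. U i x \<partial>M))"
    using seq.hyps by (simp add: SUP_apply image_comp nn_integral_monotone_convergence_SUP)
  also have "\<dots> = (SUP i. (\<Sum>j\<in>J. c j * (\<integral>\<^sup>+x. U i x \<partial>N j)))" using seq.IH by simp
  also have "\<dots> = (\<Sum>j\<in>J. (SUP i. c j * (\<integral>\<^sup>+x. U i x \<partial>N j)))"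
    using seq.hyps
    by (intro ennreal_SUP_sum) (auto simp: incseq_def le_fun_def intro!: mult_left_mono nn_integral_mono)
  also have "\<dots> = (\<Sum>j\<in>J. c j * (SUP i. (\<integral>\<^sup>+x. U i x \<partial>N j)))"
    by (simp add: SUP_mult_left_ennreal)
  also have "\<dots> = (\<Sum>j\<in>J. c j * (\<integral>\<^sup>+x. (SUP i. U i) x \<partial>N j))"
    using seq.hyps U_N by (simp add: SUP_apply image_comp nn_integral_monotone_convergence_SUP)
  finally show ?case .
qed

lemma integral_mixture:
  fixes N :: "'j \<Rightarrow> 'a measure" and c :: "'j \<Rightarrow> real" and f :: "'a \<Rightarrow> real"
  assumes "finite J" and sets_N: "\<And>j. j \<in> J \<Longrightarrow> sets (N j) = sets M"
    and c_pos: "\<And>j. j \<in> J \<Longrightarrow> c j > 0"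
    and emeasure_M: "\<And>A. A \<in> sets M \<Longrightarrow> emeasure M A = (\<Sum>j\<in>J. ennreal (c j) * emeasure (N j) A)"
    and f: "integrable M f"
  shows "integral\<^sup>L M f = (\<Sum>j\<in>J. c j * integral\<^sup>L (N j) f)"
proof -
  have f_N: "f \<in> borel_measurable (N j)" if "j \<in> J" for j
    using f by (simp add: measurable_cong_sets[OF sets_N[OF that] refl])
  have mixture: "(\<integral>\<^sup>+x. ennreal (g x) \<partial>M) = (\<Sum>j\<in>J. ennreal (c j) * (\<integral>\<^sup>+x. ennreal (g x) \<partial>N j))"
    if "g \<in> borel_measurable M" for g
    using that by (intro nn_integral_mixture[OF \<open>finite J\<close> sets_N emeasure_M]) auto
  have finite_M: "(\<integral>\<^sup>+x. ennreal (f x) \<partial>M) < top" "(\<integral>\<^sup>+x. ennreal (- f x) \<partial>M) < top"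
    using f unfolding real_integrable_def by (auto simp: less_top)
  have summand_finite: "X j < top" if "(\<Sum>j\<in>J. ennreal (c j) * X j) < top" "j \<in> J" for X j
  proof -
    have "ennreal (c j) * X j \<le> (\<Sum>j\<in>J. ennreal (c j) * X j)"
      using that(2) \<open>finite J\<close> by (intro member_le_sum) auto
    then have "ennreal (c j) * X j < top" using that(1) by (rule le_less_trans)
    then show ?thesis using c_pos[OF that(2)] by (auto simp: ennreal_mult_less_top)
  qed
  have finite_N: "(\<integral>\<^sup>+x. ennreal (f x) \<partial>N j) < top" "(\<integral>\<^sup>+x. ennreal (- f x) \<partial>N j) < top"
    if "j \<in> J" for j
    using summand_finite[OF finite_M(1)[unfolded mixture[OF borel_measurable_integrable[OF f]]] that]
      summand_finite[OF finite_M(2)[unfolded mixture[OF borel_measurable_uminus[OF borel_measurable_integrable[OF f]]]] that]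
    by auto
  have int_N: "integrable (N j) f" if "j \<in> J" for j
    unfolding real_integrable_def using f_N[OF that] finite_N[OF that] by auto
  have "integral\<^sup>L M f = enn2real (\<integral>\<^sup>+x. f x \<partial>M) - enn2real (\<integral>\<^sup>+x. ennreal (- f x) \<partial>M)"
    by (rule real_lebesgue_integral_def[OF f])
  also have "\<dots> = (\<Sum>j\<in>J. c j * enn2real (\<integral>\<^sup>+x. f x \<partial>N j))
      - (\<Sum>j\<in>J. c j * enn2real (\<integral>\<^sup>+x. ennreal (- f x) \<partial>N j))"
    using finite_N c_pos f
    by (simp add: mixture enn2real_sum ennreal_mult_less_top enn2real_mult less_imp_le)
  also have "\<dots> = (\<Sum>j\<in>J. c j * integral\<^sup>L (N j) f)"
    by (simp add: sum_subtractf[symmetric] right_diff_distrib real_lebesgue_integral_def[OF int_N])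
  finally show ?thesis .
qed

lemma sets_MS_bar: "sets (MS_bar L \<phi> p \<mu>) = sets borel"
  unfolding MS_bar_def using sets.sigma_sets_eq[of borel] by simp

lemma emeasure_MS_bar:
  fixes \<phi> :: "nat \<Rightarrow> ('i::finite \<Rightarrow> 'a::metric_space) \<Rightarrow> 'a"
  assumes "\<mu> \<in> Pc" "\<And>j. j < L \<Longrightarrow> continuous_on UNIV (\<phi> j)" "A \<in> sets borel"
  shows "emeasure (MS_bar L \<phi> p \<mu>) A = (\<Sum>j<L. ennreal (p j) * emeasure (distr (prodM \<mu>) borel (\<phi> j)) A)"
proof -
  let ?F = "\<lambda>B. \<Sum>j<L. ennreal (p j) * emeasure (prodM \<mu> :: ('i \<Rightarrow> 'a) measure)
                                   (\<phi> j -` B \<inter> space (prodM \<mu> :: ('i \<Rightarrow> 'a) measure))"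
  have "\<phi> j \<in> borel_measurable (prodM \<mu>)" if "j < L" for j
    using assms(1) assms(2)[OF that] by (rule borel_measurable_prodM)
  then have F_eq: "?F B = (\<Sum>j<L. ennreal (p j) * emeasure (distr (prodM \<mu>) borel (\<phi> j)) B)"
    if "B \<in> sets borel" for B
    using that by (intro sum.cong refl) (simp add: emeasure_distr)
  have "countably_additive (sets borel) ?F"
    unfolding countably_additive_def
  proof (intro allI impI)
    fix A :: "nat \<Rightarrow> 'a set"
    assume A: "range A \<subseteq> sets borel" "disjoint_family A" "\<Union> (range A) \<in> sets borel"
    have "(\<Sum>i. ?F (A i)) = (\<Sum>i. \<Sum>j<L. ennreal (p j) * emeasure (distr (prodM \<mu>) borel (\<phi> j)) (A i))"
      using A(1) F_eq by auto
    also have "\<dots> = (\<Sum>j<L. ennreal (p j) * (\<Sum>i. emeasure (distr (prodM \<mu>) borel (\<phi> j)) (A i)))"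
      by (subst suminf_sum) (auto simp: ennreal_suminf_cmult)
    also have "\<dots> = (\<Sum>j<L. ennreal (p j) * emeasure (distr (prodM \<mu>) borel (\<phi> j)) (\<Union>i. A i))"
      using A by (intro sum.cong refl arg_cong2[where f="(*)"] suminf_emeasure) auto
    also have "\<dots> = ?F (\<Union> (range A))" using F_eq A(3) by simp
    finally show "(\<Sum>i. ?F (A i)) = ?F (\<Union> (range A))" .
  qed
  moreover have "sigma_algebra UNIV (sets borel)"
    using sets.sigma_algebra_axioms[of borel] by simp
  ultimately have "emeasure (MS_bar L \<phi> p \<mu>) A = ?F A"
    unfolding MS_bar_def using assms(3) by (intro emeasure_measure_of_sigma) (auto simp: positive_def)
  then show ?thesis using F_eq[OF assms(3)] by simp
qed

lemma MS_bar_in_Pc: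
  fixes \<phi> :: "nat \<Rightarrow> ('i::finite \<Rightarrow> 'a::metric_space) \<Rightarrow> 'a"
  assumes \<mu>: "\<mu> \<in> Pc" and cont: "\<And>j. j < L \<Longrightarrow> continuous_on UNIV (\<phi> j)"
    and "\<And>j. j < L \<Longrightarrow> p j > 0" "(\<Sum>j<L. p j) = 1"
  shows "MS_bar L \<phi> p \<mu> \<in> Pc"
proof -
  interpret P: prob_space "prodM \<mu> :: ('i \<Rightarrow> 'a) measure" using prob_space_prodM[OF \<mu>] .
  define K where "K = (\<Union>j<L. \<phi> j ` (\<Pi>\<^sub>E k\<in>UNIV. csupp \<mu>))"
  have "compact (\<Pi>\<^sub>E k\<in>(UNIV :: 'i set). csupp \<mu>)" using compact_csupp[OF \<mu>] by (rule compact_PiE)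
  then have "compact K"
    unfolding K_def using cont by (intro compact_UN compact_continuous_image) (auto intro: continuous_on_subset)
  then have K: "K \<in> sets borel" by (intro borel_closed compact_imp_closed)
  have p_sum: "(\<Sum>j<L. ennreal (p j)) = 1"
    using assms(3,4) by (subst sum_ennreal) (auto simp: less_imp_le)
  have meas: "\<phi> j \<in> borel_measurable (prodM \<mu>)" if "j < L" for j
    using \<mu> cont[OF that] by (rule borel_measurable_prodM)
  have full: "emeasure (MS_bar L \<phi> p \<mu>) B = 1"
    if "B \<in> sets borel" "\<And>j. j < L \<Longrightarrow> \<phi> j -` B \<inter> space (prodM \<mu>) = space (prodM \<mu>)" for B
  proof -
    have "emeasure (MS_bar L \<phi> p \<mu>) B = (\<Sum>j<L. ennreal (p j) * emeasure (distr (prodM \<mu>) borel (\<phi> j)) B)"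
      using \<mu> cont that(1) by (rule emeasure_MS_bar)
    also have "\<dots> = (\<Sum>j<L. ennreal (p j))"
      using that meas by (intro sum.cong refl) (simp add: emeasure_distr P.emeasure_space_1)
    finally show ?thesis using p_sum by simp
  qed
  have "emeasure (MS_bar L \<phi> p \<mu>) UNIV = 1" by (rule full) auto
  moreover have "emeasure (MS_bar L \<phi> p \<mu>) K = 1"
    using K by (rule full) (auto simp: K_def space_prodM[OF \<mu>])
  moreover have "space (MS_bar L \<phi> p \<mu>) = UNIV"
    using sets_eq_imp_space_eq[OF sets_MS_bar] by simp
  ultimately show ?thesis
    unfolding Pc_def using \<open>compact K\<close> by (auto simp: sets_MS_bar intro: prob_spaceI)
qed

lemma integral_MS_bar:
  fixes \<phi> :: "nat \<Rightarrow> ('i::finite \<Rightarrow> 'a::metric_space) \<Rightarrow> 'a" and f :: "'a \<Rightarrow> real"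
  assumes \<mu>: "\<mu> \<in> Pc" and cont: "\<And>j. j < L \<Longrightarrow> continuous_on UNIV (\<phi> j)"
    and p: "\<And>j. j < L \<Longrightarrow> p j > 0" "(\<Sum>j<L. p j) = 1"
    and f: "continuous_on UNIV f"
  shows "integral\<^sup>L (MS_bar L \<phi> p \<mu>) f = (\<Sum>j<L. p j * (\<integral>x. f (\<phi> j x) \<partial>prodM \<mu>))"
proof -
  have "MS_bar L \<phi> p \<mu> \<in> Pc" using \<mu> cont p by (rule MS_bar_in_Pc)
  then have "integral\<^sup>L (MS_bar L \<phi> p \<mu>) f = (\<Sum>j<L. p j * integral\<^sup>L (distr (prodM \<mu>) borel (\<phi> j)) f)"
    using p(1) emeasure_MS_bar[where \<phi>=\<phi> and L=L and p=p, OF \<mu> cont] integrable_continuous_Pc[OF _ f]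
    by (intro integral_mixture) (auto simp: sets_MS_bar)
  also have "\<dots> = (\<Sum>j<L. p j * (\<integral>x. f (\<phi> j x) \<partial>prodM \<mu>))"
    using borel_measurable_prodM[OF \<mu> cont] borel_measurable_continuous_onI[OF f]
    by (intro sum.cong refl) (simp add: integral_distr)
  finally show ?thesis .
qed

lemma dMK_MS_bar_le:
  fixes \<phi> :: "nat \<Rightarrow> ('i::finite \<Rightarrow> 'a::metric_space) \<Rightarrow> 'a"
  assumes "\<mu> \<in> Pc" "\<nu> \<in> Pc" "\<And>i. a i \<ge> 0"
    and cont: "\<And>j. j < L \<Longrightarrow> continuous_on UNIV (\<phi> j)"
    and p: "\<And>j. j < L \<Longrightarrow> p j > 0" "(\<Sum>j<L. p j) = 1"
    and contr: "\<And>j. j < L \<Longrightarrow> is_contraction_m a (\<phi> j)"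
  shows "dMK (MS_bar L \<phi> p \<mu>) (MS_bar L \<phi> p \<nu>) \<le> (\<Sum>i\<in>UNIV. a i) * dMK \<mu> \<nu>"
proof (rule dMK_leI)
  fix f :: "'a \<Rightarrow> real" assume f: "lipschitz_on 1 UNIV f"
  let ?D = "\<lambda>j. (\<integral>x. f (\<phi> j x) \<partial>prodM \<mu>) - (\<integral>x. f (\<phi> j x) \<partial>prodM \<nu>)"
  have "\<bar>?D j\<bar> \<le> (\<Sum>i\<in>UNIV. a i) * dMK \<mu> \<nu>" if "j < L" for j
    using assms(1-3) weighted_lipschitz_comp[OF f contr[OF that]] by (rule abs_integral_prodM_diff_le)
  then have "\<bar>\<Sum>j<L. p j * ?D j\<bar> \<le> (\<Sum>j<L. p j * ((\<Sum>i\<in>UNIV. a i) * dMK \<mu> \<nu>))"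
    using p(1) by (intro order_trans[OF sum_abs] sum_mono) (auto simp: abs_mult abs_of_pos intro!: mult_left_mono)
  also have "\<dots> = (\<Sum>i\<in>UNIV. a i) * dMK \<mu> \<nu>" using p(2) by (simp add: sum_distrib_right[symmetric])
  finally show "\<bar>integral\<^sup>L (MS_bar L \<phi> p \<mu>) f - integral\<^sup>L (MS_bar L \<phi> p \<nu>) f\<bar> \<le> (\<Sum>i\<in>UNIV. a i) * dMK \<mu> \<nu>"
    using lipschitz_on_continuous_on[OF f] assms(1,2) cont p
    by (simp add: integral_MS_bar sum_subtractf right_diff_distrib)
qed

theorem mainTheorem2:
  fixes a :: "'m::finite \<Rightarrow> real"
    and L :: nat
    and \<phi> :: "nat \<Rightarrow> ('m \<Rightarrow> 'a::metric_space) \<Rightarrow> 'a"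
    and p :: "nat \<Rightarrow> real"
  assumes a_nonneg: "\<And>i. a i \<ge> 0"
    and a_sum: "(\<Sum>i\<in>UNIV. a i) < 1"
    and phi_cont: "\<And>j. j < L \<Longrightarrow> continuous_on UNIV (\<phi> j)"
    and p_pos: "\<And>j. j < L \<Longrightarrow> p j > 0"
    and p_sum: "(\<Sum>j<L. p j) = 1"
    and phi_contr: "\<And>j. j < L \<Longrightarrow> is_contraction_m a (\<phi> j)"
  shows "(\<forall>\<mu>\<in>Pc. MS_bar L \<phi> p \<mu> \<in> Pc)
       \<and> (\<forall>\<mu>\<in>Pc. \<forall>\<nu>\<in>Pc.
            dMK (MS_bar L \<phi> p \<mu>) (MS_bar L \<phi> p \<nu>) \<le> (\<Sum>i\<in>UNIV. a i) * dMK \<mu> \<nu>)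
       \<and> (\<Sum>i\<in>UNIV. a i) < 1"
proof -
  have "MS_bar L \<phi> p \<mu> \<in> Pc" if "\<mu> \<in> Pc" for \<mu>
    using that phi_cont p_pos p_sum by (rule MS_bar_in_Pc)
  moreover have "dMK (MS_bar L \<phi> p \<mu>) (MS_bar L \<phi> p \<nu>) \<le> (\<Sum>i\<in>UNIV. a i) * dMK \<mu> \<nu>"
    if "\<mu> \<in> Pc" "\<nu> \<in> Pc" for \<mu> \<nu>
    using that a_nonneg phi_cont p_pos p_sum phi_contr by (rule dMK_MS_bar_le)
  ultimately show ?thesis using a_sum by blast
qed

end
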